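(* Every graph $G\in\mathcal{V}_1$ can be properly vertex colored with at most $3$ colors. Moreover, a graph $G\in\mathcal{V}_1$ can be properly vertex colored with at most $2$ colors if and only if $G$ contains no cycle of odd length.
   Context: All graphs are finite simple graphs. For a vertex $x$, $S(x)$ is the subgraph induced by the neighbors of $x$. $\mathcal{V}_1$ is the class of one-dimensional varieties, defined as follows: $G\in\mathcal{V}_1$ if every unit sphere $S(x)$ is a nonempty graph without edges (equivalently, $G$ is triangle-free and has no isolated vertices), and, writing $\sigma(G)$ for the subgraph induced by the vertices of degree at least $3$ (the singularities) and $\delta(G)$ for the subgraph induced by the vertices of degree $1$ (the boundary), both $\sigma(G)$ and $\delta(G)$ have no edges. *)

theory Defs
  imports Main
begin

definition simple_graph :: "'a set \<Rightarrow> ('a \<Rightarrow> 'a \<Rightarrow> bool) \<Rightarrow> bool" where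
  "simple_graph V E \<longleftrightarrow> finite V \<and> (\<forall>x y. E x y \<longrightarrow> x \<in> V \<and> y \<in> V)
     \<and> (\<forall>x y. E x y \<longrightarrow> E y x) \<and> (\<forall>x. \<not> E x x)"

text \<open>Vertex set of the unit sphere S(x) (the subgraph induced by the neighbours of x).\<close>
definition nbrs :: "'a set \<Rightarrow> ('a \<Rightarrow> 'a \<Rightarrow> bool) \<Rightarrow> 'a \<Rightarrow> 'a set" where
  "nbrs V E x = {y \<in> V. E x y}"

definition deg :: "'a set \<Rightarrow> ('a \<Rightarrow> 'a \<Rightarrow> bool) \<Rightarrow> 'a \<Rightarrow> nat" where
  "deg V E x = card (nbrs V E x)"

definition in_V1 :: "'a set \<Rightarrow> ('a \<Rightarrow> 'a \<Rightarrow> bool) \<Rightarrow> bool" where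
  "in_V1 V E \<longleftrightarrow> simple_graph V E
     \<and> (\<forall>x\<in>V. nbrs V E x \<noteq> {} \<and> (\<forall>y\<in>nbrs V E x. \<forall>z\<in>nbrs V E x. \<not> E y z))
     \<and> (\<forall>x y. E x y \<and> 3 \<le> deg V E x \<and> 3 \<le> deg V E y \<longrightarrow> False)
     \<and> (\<forall>x y. E x y \<and> deg V E x = 1 \<and> deg V E y = 1 \<longrightarrow> False)"

definition colorable :: "'a set \<Rightarrow> ('a \<Rightarrow> 'a \<Rightarrow> bool) \<Rightarrow> nat \<Rightarrow> bool" where
  "colorable V E k \<longleftrightarrow> (\<exists>c :: 'a \<Rightarrow> nat. (\<forall>x\<in>V. c x < k) \<and> (\<forall>x y. E x y \<longrightarrow> c x \<noteq> c y))"

definition is_cycle :: "'a set \<Rightarrow> ('a \<Rightarrow> 'a \<Rightarrow> bool) \<Rightarrow> 'a list \<Rightarrow> bool" where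
  "is_cycle V E xs \<longleftrightarrow> 3 \<le> length xs \<and> distinct xs \<and> set xs \<subseteq> V
     \<and> (\<forall>i. Suc i < length xs \<longrightarrow> E (xs ! i) (xs ! Suc i))
     \<and> E (last xs) (hd xs)"

definition has_odd_cycle :: "'a set \<Rightarrow> ('a \<Rightarrow> 'a \<Rightarrow> bool) \<Rightarrow> bool" where
  "has_odd_cycle V E \<longleftrightarrow> (\<exists>xs. is_cycle V E xs \<and> odd (length xs))"

end

theory Submission
  imports Defs
begin

(* The singular vertices (degree at least 3) are pairwise non-adjacent, so they can all share
   one colour; every other vertex has at most two neighbours and is then coloured greedily from
   three colours.

   The two-colour criterion holds in every finite simple graph: colour each vertex by the parity
   of a walk reaching it from a fixed vertex of its component. Two walks of different parity
   between the same vertices give an odd closed walk, and an odd closed walk contains an odd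
   cycle, because splitting it at a repeated vertex gives two shorter closed walks, one of them
   odd. *)

definition closed_walk :: "('a \<Rightarrow> 'a \<Rightarrow> bool) \<Rightarrow> 'a list \<Rightarrow> bool" where
  "closed_walk E xs \<longleftrightarrow> xs \<noteq> [] \<and> successively E xs \<and> E (last xs) (hd xs)"

lemma successively_append_Cons_iff:
  "successively E (xs @ y # zs) \<longleftrightarrow> successively E (xs @ [y]) \<and> successively E (y # zs)"
  by (induction xs rule: induct_list012) auto

lemma closed_walk_split:
  assumes "closed_walk E (as @ [y] @ bs @ [y] @ cs)"
  shows "closed_walk E (y # bs)" and "closed_walk E (as @ [y] @ cs)"
proof -
  have walk: "successively E (as @ [y] @ bs @ [y] @ cs)"
    and closing: "E (last (as @ [y] @ bs @ [y] @ cs)) (hd (as @ [y] @ bs @ [y] @ cs))"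
    using assms unfolding closed_walk_def by simp_all
  have "successively E (as @ [y])" and loop: "successively E ((y # bs) @ [y])"
    and "successively E (y # cs)"
    using walk successively_append_Cons_iff[of E as y "bs @ y # cs"]
      successively_append_Cons_iff[of E "y # bs" y cs] by simp_all
  show "closed_walk E (y # bs)"
    using loop unfolding closed_walk_def successively_append_iff[of E "y # bs" "[y]"] by simp
  show "closed_walk E (as @ [y] @ cs)"
    using closing \<open>successively E (as @ [y])\<close> \<open>successively E (y # cs)\<close>
      successively_append_Cons_iff[of E as y cs]
    unfolding closed_walk_def by (auto simp: hd_append)
qed

lemma closed_walk_set_subset:
  assumes "simple_graph V E" and "closed_walk E xs"
  shows "set xs \<subseteq> V"
proof
  fix x assume "x \<in> set xs"
  then obtain as bs where xs: "xs = as @ x # bs" by (meson split_list)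
  have "\<exists>y. E x y"
  proof (cases bs)
    case Nil
    then show ?thesis using assms(2) xs unfolding closed_walk_def by auto
  next
    case (Cons b bs')
    then show ?thesis using assms(2) xs unfolding closed_walk_def
      by (auto simp: successively_append_iff)
  qed
  then show "x \<in> V" using assms(1) unfolding simple_graph_def by blast
qed

lemma odd_closed_walk_imp_has_odd_cycle:
  assumes "simple_graph V E" and "closed_walk E xs" and "odd (length xs)"
  shows "has_odd_cycle V E"
  using assms(2,3)
proof (induction xs rule: length_induct)
  case (1 xs)
  show ?case
  proof (cases "distinct xs")
    case True
    have "length xs \<noteq> 1"
      using "1.prems"(1) assms(1) unfolding closed_walk_def simple_graph_def
      by (auto simp: length_Suc_conv)
    with "1.prems"(2) have "3 \<le> length xs" by presburger
    then have "is_cycle V E xs"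
      using True "1.prems"(1) closed_walk_set_subset[OF assms(1)]
      unfolding is_cycle_def closed_walk_def by (simp add: successively_conv_nth)
    then show ?thesis using "1.prems"(2) unfolding has_odd_cycle_def by blast
  next
    case False
    then obtain as y bs cs where xs: "xs = as @ [y] @ bs @ [y] @ cs"
      using not_distinct_decomp by blast
    have IH: "\<And>ys. length ys < length xs \<Longrightarrow> closed_walk E ys \<Longrightarrow> odd (length ys)
                \<Longrightarrow> has_odd_cycle V E"
      using "1.IH" by blast
    note closed_walk_split[OF "1.prems"(1)[unfolded xs]]
    moreover have "odd (length (y # bs)) \<or> odd (length (as @ [y] @ cs))"
      using "1.prems"(2) unfolding xs by auto
    moreover have "length (y # bs) < length xs" "length (as @ [y] @ cs) < length xs"
      unfolding xs by simp_all
    ultimately show ?thesis using IH by blast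
  qed
qed

lemma relpowp_imp_successively_list:
  assumes "(E ^^ n) x y"
  shows "\<exists>xs. hd xs = x \<and> last xs = y \<and> successively E xs \<and> length xs = Suc n"
  using assms
proof (induction n arbitrary: x)
  case 0
  then show ?case by (intro exI[of _ "[x]"]) auto
next
  case (Suc n)
  then obtain z xs where "E x z" "hd xs = z" "last xs = y" "successively E xs" "length xs = Suc n"
    by (metis relpowp_Suc_E2)
  then show ?case by (intro exI[of _ "x # xs"]) (auto simp: successively_Cons)
qed

lemma odd_closed_relpowp_imp_has_odd_cycle:
  assumes "simple_graph V E" and "(E ^^ n) x x" and "odd n"
  shows "has_odd_cycle V E"
proof -
  obtain xs where xs: "hd xs = x" "last xs = x" "successively E xs" "length xs = Suc n"
    using relpowp_imp_successively_list[OF assms(2)] by blast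
  obtain ys where ys: "xs = ys @ [x]" using xs(2,4) by (cases xs rule: rev_cases) auto
  then have "length ys = n" using xs(4) by simp
  then have "ys \<noteq> []" and "odd (length ys)" using assms(3) by auto
  then have "closed_walk E ys"
    using xs(1,3) unfolding closed_walk_def ys by (simp add: successively_append_iff)
  then show ?thesis using \<open>odd (length ys)\<close> by (rule odd_closed_walk_imp_has_odd_cycle[OF assms(1)])
qed

lemma relpowp_symp: "symp E \<Longrightarrow> (E ^^ n) x y \<Longrightarrow> (E ^^ n) y x"
proof (induction n arbitrary: x)
  case (Suc n)
  then show ?case by (metis relpowp_Suc_E2 relpowp_Suc_I sympD)
qed simp

lemma relpowp_parity_unique:
  assumes "simple_graph V E" and "\<not> has_odd_cycle V E"
    and "(E ^^ m) x y" and "(E ^^ n) x y"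
  shows "even m \<longleftrightarrow> even n"
proof -
  have "symp E" using assms(1) unfolding simple_graph_def by (simp add: sympI)
  then have "(E ^^ (m + n)) x x"
    using assms(3,4) by (metis relpowp_symp relpowp_trans)
  then show ?thesis
    using odd_closed_relpowp_imp_has_odd_cycle[OF assms(1)] assms(2) by fastforce
qed

lemma colorable_2_if_no_odd_cycle:
  assumes sg: "simple_graph V E" and no_odd: "\<not> has_odd_cycle V E"
  shows "colorable V E 2"
proof -
  have "symp E" using sg unfolding simple_graph_def by (simp add: sympI)
  then have conn_equiv: "equivp E\<^sup>*\<^sup>*" by (rule equivp_rtranclp)
  define root where "root x = Eps (E\<^sup>*\<^sup>* x)" for x
  have root_adj: "root x = root y" if "E x y" for x y
    using conn_equiv that unfolding root_def equivp_def by (metis r_into_rtranclp)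
  have "E\<^sup>*\<^sup>* x (root x)" for x unfolding root_def by (rule someI[of _ x]) simp
  then have "\<exists>n. (E ^^ n) (root x) x" for x
    using conn_equiv by (metis equivp_symp rtranclp_imp_relpowp)
  then obtain len where len: "\<And>x. (E ^^ len x) (root x) x" by metis
  show ?thesis unfolding colorable_def
  proof (intro exI[of _ "\<lambda>x. len x mod 2"] conjI ballI allI impI)
    fix x y assume "E x y"
    then have "(E ^^ Suc (len x)) (root y) y"
      using len root_adj relpowp_Suc_I by metis
    then have "even (Suc (len x)) \<longleftrightarrow> even (len y)"
      using relpowp_parity_unique[OF sg no_odd] len by blast
    then show "len x mod 2 \<noteq> len y mod 2" by presburger
  qed simp
qed

lemma no_odd_cycle_if_colorable_2:
  assumes "colorable V E 2"
  shows "\<not> has_odd_cycle V E"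
proof
  assume "has_odd_cycle V E"
  then obtain xs where "is_cycle V E xs" and odd_len: "odd (length xs)"
    unfolding has_odd_cycle_def by blast
  then have sub: "set xs \<subseteq> V" and path: "\<And>i. Suc i < length xs \<Longrightarrow> E (xs ! i) (xs ! Suc i)"
    and len3: "3 \<le> length xs" and closing: "E (last xs) (hd xs)"
    unfolding is_cycle_def by auto
  obtain c :: "'a \<Rightarrow> nat" where c_lt: "\<forall>x\<in>V. c x < 2" and c_proper: "\<forall>x y. E x y \<longrightarrow> c x \<noteq> c y"
    using assms unfolding colorable_def by blast
  have c_nth: "c (xs ! i) < 2" if "i < length xs" for i using c_lt sub nth_mem[OF that] by blast
  have "xs \<noteq> []" using len3 by auto
  then have c_0: "c (xs ! 0) < 2" using c_nth[of 0] by simp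
  have alternate: "c (xs ! i) = (if even i then c (xs ! 0) else 1 - c (xs ! 0))"
    if "i < length xs" for i
    using that
  proof (induction i)
    case (Suc i)
    then have "c (xs ! i) \<noteq> c (xs ! Suc i)" using path c_proper by auto
    moreover have "c (xs ! Suc i) < 2" "c (xs ! i) < 2"
      using c_nth[of "Suc i"] c_nth[of i] Suc.prems by simp_all
    ultimately show ?case using Suc c_0 by auto
  qed simp
  have "c (last xs) = c (hd xs)"
    using alternate[of "length xs - 1"] \<open>xs \<noteq> []\<close> odd_len by (simp add: last_conv_nth hd_conv_nth)
  then show False using c_proper closing by auto
qed

definition proper_on :: "('a \<Rightarrow> 'a \<Rightarrow> bool) \<Rightarrow> 'a set \<Rightarrow> ('a \<Rightarrow> nat) \<Rightarrow> bool" where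
  "proper_on E S c \<longleftrightarrow> (\<forall>x\<in>S. \<forall>y\<in>S. E x y \<longrightarrow> c x \<noteq> c y)"

lemma proper_on_insert_low_degree:
  assumes sg: "simple_graph V E" and "deg V E u < k" and "proper_on E S c"
  obtains a where "a < k" and "proper_on E (insert u S) (c(u := a))"
proof -
  have fin: "finite (nbrs V E u)" using sg unfolding simple_graph_def nbrs_def by simp
  have "\<not> {..<k} \<subseteq> c ` nbrs V E u"
  proof
    assume "{..<k} \<subseteq> c ` nbrs V E u"
    then have "k \<le> card (c ` nbrs V E u)" using card_mono[OF finite_imageI[OF fin]] by fastforce
    then show False using card_image_le[OF fin, of c] assms(2) unfolding deg_def by linarith
  qed
  then obtain a where "a < k" and a_free: "a \<notin> c ` nbrs V E u" by blast
  have irrefl: "\<not> E u u" and nbr: "\<And>x. E u x \<or> E x u \<Longrightarrow> x \<in> nbrs V E u"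
    using sg unfolding simple_graph_def nbrs_def by auto
  have "proper_on E (insert u S) (c(u := a))"
    unfolding proper_on_def
  proof (intro ballI impI)
    fix x y assume "x \<in> insert u S" "y \<in> insert u S" "E x y"
    then show "(c(u := a)) x \<noteq> (c(u := a)) y"
      using assms(3) a_free irrefl nbr unfolding proper_on_def
      by (cases "x = u"; cases "y = u") auto
  qed
  then show thesis using that \<open>a < k\<close> by blast
qed

lemma colorable_if_high_degree_independent:
  assumes sg: "simple_graph V E" and "0 < k"
    and indep: "\<And>x y. E x y \<Longrightarrow> k \<le> deg V E x \<Longrightarrow> k \<le> deg V E y \<Longrightarrow> False"
  shows "colorable V E k"
proof -
  define L where "L = {x\<in>V. deg V E x < k}"
  have extend: "\<exists>c. (\<forall>x\<in>V. c x < k) \<and> proper_on E (U \<union> (V - L)) c" if "finite U" "U \<subseteq> L" for U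
    using that
  proof (induction U rule: finite_subset_induct)
    case empty
    have "proper_on E (V - L) (\<lambda>_. 0)"
    proof (unfold proper_on_def, intro ballI impI)
      fix x y assume "x \<in> V - L" "y \<in> V - L" "E x y"
      then have "k \<le> deg V E x" "k \<le> deg V E y" unfolding L_def by auto
      then show "(0::nat) \<noteq> 0" using indep \<open>E x y\<close> by blast
    qed
    then show ?case using \<open>0 < k\<close> by auto
  next
    case (insert u U)
    then obtain c where c_lt: "\<forall>x\<in>V. c x < k" and proper: "proper_on E (U \<union> (V - L)) c" by blast
    have "deg V E u < k" using insert(2) unfolding L_def by simp
    then obtain a where "a < k" and proper': "proper_on E (insert u U \<union> (V - L)) (c(u := a))"
      unfolding Un_insert_left by (rule proper_on_insert_low_degree[OF sg _ proper])
    then have "\<forall>x\<in>V. (c(u := a)) x < k" using c_lt by simp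
    then show ?case using proper' by (intro exI[of _ "c(u := a)"] conjI)
  qed
  have "finite L" "L \<subseteq> V" using sg unfolding L_def simple_graph_def by auto
  then obtain c where "\<forall>x\<in>V. c x < k" "proper_on E (L \<union> (V - L)) c"
    using extend by blast
  moreover have "L \<union> (V - L) = V" using \<open>L \<subseteq> V\<close> by blast
  moreover have "\<And>x y. E x y \<Longrightarrow> x \<in> V \<and> y \<in> V" using sg unfolding simple_graph_def by blast
  ultimately show ?thesis unfolding colorable_def proper_on_def by auto
qed

theorem mainTheorem15:
  fixes V :: "'a set" and E :: "'a \<Rightarrow> 'a \<Rightarrow> bool"
  assumes "in_V1 V E"
  shows "colorable V E 3 \<and> (colorable V E 2 \<longleftrightarrow> \<not> has_odd_cycle V E)"
proof -
  have sg: "simple_graph V E" using assms unfolding in_V1_def by blast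
  have "colorable V E 3"
    by (rule colorable_if_high_degree_independent[OF sg]) (use assms in \<open>auto simp: in_V1_def\<close>)
  then show ?thesis
    using colorable_2_if_no_odd_cycle[OF sg] no_odd_cycle_if_colorable_2 by blast
qed

end
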